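(* Let $G=(V,E,w)$ be an undirected graph with edge weights $w:E\to\mathbb{R}^+$, and let $s,t\in V$. Run the bidirectional stepping search described in the context, using the pruning rule "prune $u^{\oplus}$ (for $\oplus\in\{+,-\}$) if and only if $\delta[u^{\oplus}]\ge \mu/2$", where $\mu$ is the current value of the global variable at the time of the check. Then, for every choice of thresholds $\theta$ in the rounds and every interleaving of the parallel atomic operations, if the algorithm terminates (i.e. the frontier becomes empty), the returned value $\mu$ equals the shortest-path distance $d(s,t)$ in $G$ (with $d(s,t)=+\infty$ if $t$ is unreachable from $s$).
   Context: Bidirectional stepping search with a pruning rule. For every vertex $v\in V$ there are two copies: $v^{+}$ (search from $s$) and $v^{-}$ (search from $t$). Each copy has a tentative distance $\delta[v^{\pm}]$, initialized to $+\infty$. A global variable $\mu$ is initialized to $+\infty$. Initialization sets $\delta[s^{+}]=0$ and $\delta[t^{-}]=0$, and inserts $s^{+}$ and $t^{-}$ into a set $F$, the frontier. While $F\neq\emptyset$, a round is executed. A real threshold $\theta$ is chosen, and it may depend arbitrarily on the current state. All elements $u^{\oplus}\in F$ with $\delta[u^{\oplus}]\le\theta$ are removed from $F$. Each removed $u^{\oplus}$ is processed in parallel as follows: - If $u^{\oplus}$ satisfies the pruning rule, nothing is done. - Otherwise, for every neighbor $v$ of $u$, the algorithm performs an atomic write-min $\delta[v^{\oplus}]\leftarrow\min(\delta[v^{\oplus}],\,\delta[u^{\oplus}]+w(u,v))$. - If this write-min strictly decreased $\delta[v^{\oplus}]$, the algorithm then atomically sets $\mu\leftarrow\min(\mu,\,\delta[v^{+}]+\delta[v^{-}])$.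 After that, if $v^{\oplus}$ does not satisfy the pruning rule, $v^{\oplus}$ is inserted into $F$ (if not already present). At termination the algorithm returns $\mu$. Tentative distances only decrease over time. $d(u,v)$ denotes the true shortest-path distance in $G$. *)

theory Defs
  imports Complex_Main "HOL-Library.Extended_Real" "HOL-Library.Multiset"
begin

definition wgraph :: "'v set \<Rightarrow> ('v \<times> 'v) set \<Rightarrow> ('v \<Rightarrow> 'v \<Rightarrow> real) \<Rightarrow> bool" where
  "wgraph V E w \<longleftrightarrow> finite V \<and> E \<subseteq> V \<times> V \<and> sym E
     \<and> (\<forall>(u,v)\<in>E. w u v > 0 \<and> w u v = w v u)"

definition is_walk :: "('v \<times> 'v) set \<Rightarrow> 'v list \<Rightarrow> bool" where
  "is_walk E p \<longleftrightarrow> p \<noteq> [] \<and> (\<forall>i < length p - 1. (p ! i, p ! Suc i) \<in> E)"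

definition walk_weight :: "('v \<Rightarrow> 'v \<Rightarrow> real) \<Rightarrow> 'v list \<Rightarrow> real" where
  "walk_weight w p = (\<Sum>i < length p - 1. w (p ! i) (p ! Suc i))"

text \<open>Shortest-path distance d(s,t); equals \<infinity> (Inf of the empty set) if t is unreachable.\<close>
definition sp_dist :: "('v \<times> 'v) set \<Rightarrow> ('v \<Rightarrow> 'v \<Rightarrow> real) \<Rightarrow> 'v \<Rightarrow> 'v \<Rightarrow> ereal" where
  "sp_dist E w s t = (INF p \<in> {p. is_walk E p \<and> hd p = s \<and> last p = t}. ereal (walk_weight w p))"

text \<open>Copies of vertices: (v, True) is v^+ (search from s), (v, False) is v^- (search from t).
  Pending atomic operations of the threads of the current round:\<close>
datatype 'v act =
    Check "'v \<times> bool"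
  | Relax "'v \<times> bool" 'v
  | UpdMu 'v bool
  | Ins "'v \<times> bool"

record 'v bstate =
  dl   :: "'v \<times> bool \<Rightarrow> ereal"
  mu   :: ereal
  fr   :: "('v \<times> bool) set"
  pend :: "'v act multiset"

definition prune :: "'v bstate \<Rightarrow> 'v \<times> bool \<Rightarrow> bool" where
  "prune \<sigma> x \<longleftrightarrow> dl \<sigma> x \<ge> mu \<sigma> / 2"

definition init_state :: "'v \<Rightarrow> 'v \<Rightarrow> 'v bstate" where
  "init_state s t = \<lparr> dl = (\<lambda>_. \<infinity>)((s, True) := 0, (t, False) := 0), mu = \<infinity>,
                      fr = {(s, True), (t, False)}, pend = {#} \<rparr>"

inductive bstep :: "('v \<times> 'v) set \<Rightarrow> ('v \<Rightarrow> 'v \<Rightarrow> real) \<Rightarrow> 'v bstate \<Rightarrow> 'v bstate \<Rightarrow> bool"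
  for E w where
  round: "pend \<sigma> = {#} \<Longrightarrow> fr \<sigma> \<noteq> {} \<Longrightarrow> R = {x \<in> fr \<sigma>. dl \<sigma> x \<le> ereal \<theta>} \<Longrightarrow>
     bstep E w \<sigma> (\<sigma>\<lparr>fr := fr \<sigma> - R, pend := image_mset Check (mset_set R)\<rparr>)"
| check_prune: "Check x \<in># pend \<sigma> \<Longrightarrow> prune \<sigma> x \<Longrightarrow>
     bstep E w \<sigma> (\<sigma>\<lparr>pend := pend \<sigma> - {#Check x#}\<rparr>)"
| check_go: "Check x \<in># pend \<sigma> \<Longrightarrow> \<not> prune \<sigma> x \<Longrightarrow>
     bstep E w \<sigma> (\<sigma>\<lparr>pend := pend \<sigma> - {#Check x#}
                      + image_mset (Relax x) (mset_set {v. (fst x, v) \<in> E})\<rparr>)"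
| relax_dec: "Relax (u, b) v \<in># pend \<sigma> \<Longrightarrow> dl \<sigma> (u, b) + ereal (w u v) < dl \<sigma> (v, b) \<Longrightarrow>
     bstep E w \<sigma> (\<sigma>\<lparr>dl := (dl \<sigma>)((v, b) := dl \<sigma> (u, b) + ereal (w u v)),
                      pend := pend \<sigma> - {#Relax (u, b) v#} + {#UpdMu v b#}\<rparr>)"
| relax_nodec: "Relax (u, b) v \<in># pend \<sigma> \<Longrightarrow> \<not> dl \<sigma> (u, b) + ereal (w u v) < dl \<sigma> (v, b) \<Longrightarrow>
     bstep E w \<sigma> (\<sigma>\<lparr>pend := pend \<sigma> - {#Relax (u, b) v#}\<rparr>)"
| updmu: "UpdMu v b \<in># pend \<sigma> \<Longrightarrow>
     bstep E w \<sigma> (\<sigma>\<lparr>mu := min (mu \<sigma>) (dl \<sigma> (v, True) + dl \<sigma> (v, False)),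
                      pend := pend \<sigma> - {#UpdMu v b#} + {#Ins (v, b)#}\<rparr>)"
| ins_yes: "Ins y \<in># pend \<sigma> \<Longrightarrow> \<not> prune \<sigma> y \<Longrightarrow>
     bstep E w \<sigma> (\<sigma>\<lparr>fr := insert y (fr \<sigma>), pend := pend \<sigma> - {#Ins y#}\<rparr>)"
| ins_no: "Ins y \<in># pend \<sigma> \<Longrightarrow> prune \<sigma> y \<Longrightarrow>
     bstep E w \<sigma> (\<sigma>\<lparr>pend := pend \<sigma> - {#Ins y#}\<rparr>)"

end

theory Submission
  imports Defs
begin

(* Soundness: every finite value of delta[v+], delta[v-] and mu is the weight of an actual
   s-v, v-t, s-t walk respectively, so mu never drops below d(s,t).

   Completeness: for every edge (u,v) and direction, either u is pruned (mu <= 2 delta[u]), or the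
   edge is relaxed (delta[v] <= delta[u] + w(u,v)), or u still has pending work; and
   mu <= delta[v+] + delta[v-] unless an update of mu at v is pending. At termination nothing is
   pending. Cut an s-t walk of weight W < mu at its weighted midpoint x: the parts before and after x
   weigh at most W/2 < mu/2, so no vertex on them is pruned, both searches propagate along them to x,
   and delta[x+] + delta[x-] <= W < mu, a contradiction. *)

lemma not_is_walk_Nil [simp]: "\<not> is_walk E []"
  by (simp add: is_walk_def)

lemma walk_weight_Nil [simp]: "walk_weight w [] = 0"
  by (simp add: walk_weight_def)

lemma is_walk_singleton [simp]: "is_walk E [x]"
  by (simp add: is_walk_def)

lemma is_walk_Cons_Cons [simp]: "is_walk E (x # y # p) \<longleftrightarrow> (x, y) \<in> E \<and> is_walk E (y # p)"
  by (auto simp: is_walk_def less_Suc_eq_0_disj)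

lemma walk_weight_singleton [simp]: "walk_weight w [x] = 0"
  by (simp add: walk_weight_def)

lemma walk_weight_Cons_Cons [simp]: "walk_weight w (x # y # p) = w x y + walk_weight w (y # p)"
  unfolding walk_weight_def length_Cons diff_Suc_1 by (subst sum.lessThan_Suc_shift) simp

lemma is_walk_append:
  "p \<noteq> [] \<Longrightarrow> q \<noteq> [] \<Longrightarrow> is_walk E (p @ q) \<longleftrightarrow> is_walk E p \<and> (last p, hd q) \<in> E \<and> is_walk E q"
  by (induction p rule: induct_list012) (auto simp: neq_Nil_conv)

lemma walk_weight_append:
  "p \<noteq> [] \<Longrightarrow> q \<noteq> [] \<Longrightarrow> walk_weight w (p @ q) = walk_weight w p + w (last p) (hd q) + walk_weight w q"
  by (induction p rule: induct_list012) (auto simp: neq_Nil_conv)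

lemma
  assumes "p \<noteq> []" "q \<noteq> []" "last p = hd q"
  shows is_walk_join: "is_walk E (p @ tl q) \<longleftrightarrow> is_walk E p \<and> is_walk E q"
    and walk_weight_join: "walk_weight w (p @ tl q) = walk_weight w p + walk_weight w q"
    and last_join: "last (p @ tl q) = last q"
proof -
  obtain r where q: "q = last p # r"
    using assms by (cases q) auto
  show "is_walk E (p @ tl q) \<longleftrightarrow> is_walk E p \<and> is_walk E q"
    using assms(1) by (cases r) (simp_all add: q is_walk_append)
  show "walk_weight w (p @ tl q) = walk_weight w p + walk_weight w q"
    using assms(1) by (cases r) (simp_all add: q walk_weight_append)
  show "last (p @ tl q) = last q"
    using assms(1) by (cases r) (simp_all add: q)
qed

lemma is_walk_rev:
  assumes "sym E"
  shows "is_walk E p \<Longrightarrow> is_walk E (rev p)"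
proof (induction p rule: induct_list012)
  case (3 x y p)
  then show ?case
    using assms by (simp add: is_walk_append[of "rev (y # p)" "[x]", simplified] symD)
qed simp_all

lemma walk_weight_rev:
  assumes "\<And>u v. (u, v) \<in> E \<Longrightarrow> w v u = w u v"
  shows "is_walk E p \<Longrightarrow> walk_weight w (rev p) = walk_weight w p"
proof (induction p rule: induct_list012)
  case (3 x y p)
  then show ?case
    using assms by (simp add: walk_weight_append[of "rev (y # p)" "[x]", simplified])
qed simp_all

lemma walk_weight_nonneg:
  "(\<And>u v. (u, v) \<in> E \<Longrightarrow> 0 \<le> w u v) \<Longrightarrow> is_walk E p \<Longrightarrow> 0 \<le> walk_weight w p"
  by (induction p rule: induct_list012) auto

lemma walk_weight_butlast_le:
  "(\<And>u v. (u, v) \<in> E \<Longrightarrow> 0 \<le> w u v) \<Longrightarrow> is_walk E p \<Longrightarrow> walk_weight w (butlast p) \<le> walk_weight w p"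
  by (induction p rule: induct_list012) auto

lemma walk_midpoint:
  assumes nonneg: "\<And>u v. (u, v) \<in> E \<Longrightarrow> 0 \<le> w u v" and walk: "is_walk E p"
  obtains q x r where "p = q @ x # r"
    and "2 * walk_weight w q \<le> walk_weight w p" and "2 * walk_weight w r \<le> walk_weight w p"
proof -
  define W where "W = walk_weight w p"
  have "0 \<le> W"
    unfolding W_def using nonneg walk by (rule walk_weight_nonneg)
  obtain k where k: "k < length p" "2 * walk_weight w (take k p) \<le> W"
    and greatest: "\<And>j. j < length p \<Longrightarrow> 2 * walk_weight w (take j p) \<le> W \<Longrightarrow> j \<le> k"
    using Nat.ex_has_greatest_nat[of "\<lambda>j. j < length p \<and> 2 * walk_weight w (take j p) \<le> W" 0 "length p"]
      \<open>0 \<le> W\<close> walk by force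
  have "2 * walk_weight w (drop (Suc k) p) \<le> W"
  proof (cases "Suc k < length p")
    case False
    then show ?thesis using \<open>0 \<le> W\<close> by simp
  next
    case True
    define a b where "a = take (Suc k) p" and "b = drop (Suc k) p"
    have "a \<noteq> []" "b \<noteq> []" "p = a @ b"
      using True by (auto simp: a_def b_def)
    then have "W = walk_weight w a + w (last a) (hd b) + walk_weight w b" "0 \<le> w (last a) (hd b)"
      using walk nonneg by (simp_all add: W_def walk_weight_append is_walk_append)
    moreover have "W < 2 * walk_weight w a"
      using greatest[of "Suc k"] True by (force simp: a_def)
    ultimately show ?thesis by (simp add: b_def)
  qed
  then show thesis
    using that[of "take k p" "p ! k" "drop (Suc k) p"] k by (simp add: W_def id_take_nth_drop)
qed

lemma relaxed_walk_bound:
  fixes D :: "'v \<Rightarrow> ereal"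
  assumes relaxed: "\<And>u v. (u, v) \<in> E \<Longrightarrow> M \<le> 2 * D u \<or> D v \<le> D u + ereal (w u v)"
    and nonneg: "\<And>u v. (u, v) \<in> E \<Longrightarrow> 0 \<le> w u v"
  shows "is_walk E p \<Longrightarrow> D (hd p) \<le> 0 \<Longrightarrow>
    D (last p) \<le> ereal (walk_weight w p) \<or> M \<le> 2 * ereal (walk_weight w (butlast p))"
proof (induction p rule: rev_induct)
  case (snoc z p)
  show ?case
  proof (cases "p = []")
    case True
    with snoc.prems show ?thesis by (simp add: zero_ereal_def)
  next
    case False
    have walk: "is_walk E p" and edge: "(last p, z) \<in> E"
      using snoc.prems(1) False by (simp_all add: is_walk_append)
    have weight: "walk_weight w (p @ [z]) = walk_weight w p + w (last p) z"
      using False by (simp add: walk_weight_append)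
    have IH: "D (last p) \<le> ereal (walk_weight w p) \<or> M \<le> 2 * ereal (walk_weight w (butlast p))"
      using snoc.IH walk snoc.prems(2) False by simp
    then show ?thesis
    proof
      assume D_last: "D (last p) \<le> ereal (walk_weight w p)"
      from relaxed[OF edge] show ?thesis
      proof
        assume "M \<le> 2 * D (last p)"
        also have "\<dots> \<le> 2 * ereal (walk_weight w p)"
          using D_last by (rule ereal_mult_left_mono) simp
        finally show ?thesis by simp
      next
        assume "D z \<le> D (last p) + ereal (w (last p) z)"
        also have "\<dots> \<le> ereal (walk_weight w p) + ereal (w (last p) z)"
          using D_last by (rule add_right_mono)
        finally show ?thesis by (simp add: weight)
      qed
    next
      assume "M \<le> 2 * ereal (walk_weight w (butlast p))"
      also have "\<dots> \<le> 2 * ereal (walk_weight w p)"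
        using walk_weight_butlast_le[of E w p] nonneg walk by simp
      finally show ?thesis by simp
    qed
  qed
qed simp

context
  fixes E :: "('v \<times> 'v) set" and w :: "'v \<Rightarrow> 'v \<Rightarrow> real" and M :: ereal and Df Db :: "'v \<Rightarrow> ereal"
    and s t :: 'v
  assumes sym: "sym E"
    and weight_sym: "\<And>u v. (u, v) \<in> E \<Longrightarrow> w v u = w u v"
    and nonneg: "\<And>u v. (u, v) \<in> E \<Longrightarrow> 0 \<le> w u v"
    and relaxed_fwd: "\<And>u v. (u, v) \<in> E \<Longrightarrow> M \<le> 2 * Df u \<or> Df v \<le> Df u + ereal (w u v)"
    and relaxed_bwd: "\<And>u v. (u, v) \<in> E \<Longrightarrow> M \<le> 2 * Db u \<or> Db v \<le> Db u + ereal (w u v)"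
    and meet: "\<And>v. M \<le> Df v + Db v"
    and source: "Df s \<le> 0" and target: "Db t \<le> 0"
begin

lemma meet_le_walk_weight:
  assumes walk: "is_walk E p" "hd p = s" "last p = t"
  shows "M \<le> ereal (walk_weight w p)"
proof (rule ccontr)
  assume "\<not> M \<le> ereal (walk_weight w p)"
  then have below_M: "\<not> M \<le> 2 * ereal a" if "2 * a \<le> walk_weight w p" for a
    using that order_trans[of M "ereal (2 * a)" "ereal (walk_weight w p)"] by auto
  obtain q x r where p: "p = q @ x # r"
    and q: "2 * walk_weight w q \<le> walk_weight w p" and r: "2 * walk_weight w r \<le> walk_weight w p"
    using walk_midpoint[of E w, OF nonneg walk(1)] by blast
  have walks: "is_walk E (q @ [x])" "is_walk E (x # r)"
    and weight: "walk_weight w p = walk_weight w (q @ [x]) + walk_weight w (x # r)"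
    using is_walk_join[of "q @ [x]" "x # r" E] walk_weight_join[of "q @ [x]" "x # r" w] walk(1)
    by (simp_all add: p)
  have "Df x \<le> ereal (walk_weight w (q @ [x]))"
    using relaxed_walk_bound[of E M Df w "q @ [x]", OF relaxed_fwd nonneg walks(1)]
      below_M[OF q] source walk(2) by (cases q) (simp_all add: p)
  moreover have "Db x \<le> ereal (walk_weight w (x # r))"
  proof (cases "r = []")
    case True
    then show ?thesis using target walk(3) by (simp add: p zero_ereal_def)
  next
    case False
    then have "is_walk E r"
      using walks(2) by (cases r) simp_all
    then have "walk_weight w (rev r) = walk_weight w r" "walk_weight w (rev (x # r)) = walk_weight w (x # r)"
      using walks(2) walk_weight_rev[of E w, OF weight_sym] by (simp_all del: rev.simps)
    then show ?thesis
      using relaxed_walk_bound[of E M Db w "rev (x # r)", OF relaxed_bwd nonneg is_walk_rev[OF sym walks(2)]]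
        below_M[OF r] target walk(3) False by (simp add: p hd_append hd_rev)
  qed
  ultimately have "M \<le> ereal (walk_weight w (q @ [x])) + ereal (walk_weight w (x # r))"
    using meet[of x] by (metis add_mono order_trans)
  with \<open>\<not> M \<le> ereal (walk_weight w p)\<close> show False
    by (simp add: weight)
qed

lemma meet_le_sp_dist: "M \<le> sp_dist E w s t"
  unfolding sp_dist_def by (rule INF_greatest) (use meet_le_walk_weight in blast)

end

definition walk_realizable :: "('v \<times> 'v) set \<Rightarrow> ('v \<Rightarrow> 'v \<Rightarrow> real) \<Rightarrow> 'v \<Rightarrow> 'v \<Rightarrow> ereal \<Rightarrow> bool" where
  "walk_realizable E w x y d \<longleftrightarrow>
     d = \<infinity> \<or> (\<exists>p. is_walk E p \<and> hd p = x \<and> last p = y \<and> d = ereal (walk_weight w p))"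

lemma walk_realizable_refl: "walk_realizable E w x x 0"
  unfolding walk_realizable_def by (intro disjI2 exI[of _ "[x]"]) (simp add: zero_ereal_def)

lemma walk_realizable_edge: "(x, y) \<in> E \<Longrightarrow> walk_realizable E w x y (ereal (w x y))"
  unfolding walk_realizable_def by (intro disjI2 exI[of _ "[x, y]"]) simp

lemma walk_realizable_join:
  assumes "walk_realizable E w x y d" "walk_realizable E w y z e"
  shows "walk_realizable E w x z (d + e)"
proof (cases "d = \<infinity> \<or> e = \<infinity>")
  case True
  with assms show ?thesis by (auto simp: walk_realizable_def)
next
  case False
  then obtain p q where p: "is_walk E p" "hd p = x" "last p = y" "d = ereal (walk_weight w p)"
      and q: "is_walk E q" "hd q = y" "last q = z" "e = ereal (walk_weight w q)"
    using assms by (auto simp: walk_realizable_def)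
  then have "p \<noteq> []" "q \<noteq> []"
    by auto
  then show ?thesis
    unfolding walk_realizable_def using p q is_walk_join[of p q E] walk_weight_join[of p q w]
    by (intro disjI2 exI[of _ "p @ tl q"]) (auto simp: last_join)
qed

lemma sp_dist_le_walk_realizable: "walk_realizable E w s t d \<Longrightarrow> sp_dist E w s t \<le> d"
  unfolding walk_realizable_def sp_dist_def by (auto intro: INF_lower2)

lemma wgraph_finite_edges: "wgraph V E w \<Longrightarrow> finite E"
  unfolding wgraph_def by (meson finite_SigmaI finite_subset)

lemma finite_successors: "finite E \<Longrightarrow> finite {v. (u, v) \<in> E}"
  by (rule finite_subset[of _ "snd ` E"]) force+

lemma prune_iff: "prune \<sigma> x \<longleftrightarrow> mu \<sigma> \<le> 2 * dl \<sigma> x"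
  unfolding prune_def by (cases "dl \<sigma> x"; cases "mu \<sigma>") auto

definition settled :: "('v \<Rightarrow> 'v \<Rightarrow> real) \<Rightarrow> 'v bstate \<Rightarrow> 'v \<times> bool \<Rightarrow> 'v \<Rightarrow> bool" where
  "settled w \<sigma> x v \<longleftrightarrow> prune \<sigma> x \<or> dl \<sigma> (v, snd x) \<le> dl \<sigma> x + ereal (w (fst x) v)"

(* A strict decrease of delta[u] can break the relaxation of an edge leaving u; the pending mu update
   and re-insertion of u keep u active until it is pruned or back in the frontier. *)
definition active :: "'v bstate \<Rightarrow> 'v \<times> bool \<Rightarrow> 'v \<Rightarrow> bool" where
  "active \<sigma> x v \<longleftrightarrow> x \<in> fr \<sigma> \<or> Check x \<in># pend \<sigma> \<or> Relax x v \<in># pend \<sigma>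
     \<or> UpdMu (fst x) (snd x) \<in># pend \<sigma> \<or> Ins x \<in># pend \<sigma>"

definition edges_settled_or_active :: "('v \<times> 'v) set \<Rightarrow> ('v \<Rightarrow> 'v \<Rightarrow> real) \<Rightarrow> 'v bstate \<Rightarrow> bool" where
  "edges_settled_or_active E w \<sigma> \<longleftrightarrow>
     finite (fr \<sigma>) \<and> (\<forall>(u, v) \<in> E. \<forall>b. settled w \<sigma> (u, b) v \<or> active \<sigma> (u, b) v)"

lemma settled_update [simp]:
  "settled w (\<sigma>\<lparr>pend := P\<rparr>) = settled w \<sigma>" "settled w (\<sigma>\<lparr>fr := F\<rparr>) = settled w \<sigma>"
  by (simp_all add: settled_def prune_def fun_eq_iff)

lemma bstep_decreasing:
  assumes "bstep E w \<sigma> \<sigma>'"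
  shows "dl \<sigma>' x \<le> dl \<sigma> x" and "mu \<sigma>' \<le> mu \<sigma>"
  using assms by (cases; simp add: less_imp_le)+

lemma prune_mono:
  assumes "prune \<sigma> x" "dl \<sigma>' x = dl \<sigma> x" "mu \<sigma>' \<le> mu \<sigma>"
  shows "prune \<sigma>' x"
proof -
  have "mu \<sigma>' / 2 \<le> mu \<sigma> / 2"
    using assms(3) by simp
  also have "\<dots> \<le> dl \<sigma>' x"
    using assms(1,2) by (simp add: prune_def)
  finally show ?thesis
    by (simp add: prune_def)
qed

lemma settled_mono:
  assumes "settled w \<sigma> x v" "dl \<sigma>' x = dl \<sigma> x" "dl \<sigma>' (v, snd x) \<le> dl \<sigma> (v, snd x)" "mu \<sigma>' \<le> mu \<sigma>"
  shows "settled w \<sigma>' x v"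
  using assms prune_mono[of \<sigma> x \<sigma>'] unfolding settled_def by (auto intro: order_trans)

lemma settled_or_active_preserved:
  assumes "settled w \<sigma> x v \<or> active \<sigma> x v"
    and "dl \<sigma>' x = dl \<sigma> x \<or> UpdMu (fst x) (snd x) \<in># pend \<sigma>'"
    and "dl \<sigma>' (v, snd x) \<le> dl \<sigma> (v, snd x)" "mu \<sigma>' \<le> mu \<sigma>"
    and "fr \<sigma> \<subseteq> fr \<sigma>'" "\<And>c. c \<in># pend \<sigma> \<Longrightarrow> c \<noteq> a \<Longrightarrow> c \<in># pend \<sigma>'"
    and "a \<in> {Check x, Relax x v, UpdMu (fst x) (snd x), Ins x} \<Longrightarrow> settled w \<sigma>' x v \<or> active \<sigma>' x v"
  shows "settled w \<sigma>' x v \<or> active \<sigma>' x v"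
  using assms settled_mono[of w \<sigma> x v \<sigma>'] unfolding active_def by blast

lemma edges_settled_or_active_step:
  assumes "finite E" and step: "bstep E w \<sigma> \<sigma>'" and inv: "edges_settled_or_active E w \<sigma>"
  shows "edges_settled_or_active E w \<sigma>'"
proof -
  have dec: "dl \<sigma>' y \<le> dl \<sigma> y" "mu \<sigma>' \<le> mu \<sigma>" for y
    using bstep_decreasing[OF step] by auto
  have fin: "finite (fr \<sigma>)" and inv_edge: "\<And>u v b. (u, v) \<in> E \<Longrightarrow> settled w \<sigma> (u, b) v \<or> active \<sigma> (u, b) v"
    using inv by (auto simp: edges_settled_or_active_def)
  have "finite (fr \<sigma>')"
    using step fin by cases auto
  moreover have "settled w \<sigma>' (u, b) v \<or> active \<sigma>' (u, b) v" if "(u, v) \<in> E" for u v b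
    using step
  proof cases
    case (round R \<theta>)
    then have "finite R" using fin by auto
    then show ?thesis using round inv_edge[OF that, of b] by (auto simp: active_def)
  next
    case (check_prune y)
    show ?thesis
      by (rule settled_or_active_preserved[OF inv_edge[OF that] _ dec, where a = "Check y"])
        (use check_prune in \<open>auto simp: settled_def in_diff_count\<close>)
  next
    case (check_go y)
    show ?thesis
      by (rule settled_or_active_preserved[OF inv_edge[OF that] _ dec, where a = "Check y"])
        (use check_go that finite_successors[OF \<open>finite E\<close>] in \<open>auto simp: active_def in_diff_count\<close>)
  next
    case (relax_dec u0 b0 v0)
    show ?thesis
      by (rule settled_or_active_preserved[OF inv_edge[OF that] _ dec, where a = "Relax (u0, b0) v0"])
        (use relax_dec in \<open>auto simp: settled_def active_def in_diff_count\<close>)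
  next
    case (relax_nodec u0 b0 v0)
    show ?thesis
      by (rule settled_or_active_preserved[OF inv_edge[OF that] _ dec, where a = "Relax (u0, b0) v0"])
        (use relax_nodec in \<open>auto simp: settled_def in_diff_count\<close>)
  next
    case (updmu v0 b0)
    show ?thesis
      by (rule settled_or_active_preserved[OF inv_edge[OF that] _ dec, where a = "UpdMu v0 b0"])
        (use updmu in \<open>auto simp: active_def in_diff_count\<close>)
  next
    case (ins_yes y)
    show ?thesis
      by (rule settled_or_active_preserved[OF inv_edge[OF that] _ dec, where a = "Ins y"])
        (use ins_yes in \<open>auto simp: active_def in_diff_count\<close>)
  next
    case (ins_no y)
    show ?thesis
      by (rule settled_or_active_preserved[OF inv_edge[OF that] _ dec, where a = "Ins y"])
        (use ins_no in \<open>auto simp: settled_def in_diff_count\<close>)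
  qed
  ultimately show ?thesis
    by (auto simp: edges_settled_or_active_def)
qed

definition distances_realizable :: "('v \<times> 'v) set \<Rightarrow> ('v \<Rightarrow> 'v \<Rightarrow> real) \<Rightarrow> 'v \<Rightarrow> 'v \<Rightarrow> 'v bstate \<Rightarrow> bool" where
  "distances_realizable E w s t \<sigma> \<longleftrightarrow>
     (\<forall>v. walk_realizable E w s v (dl \<sigma> (v, True)) \<and> walk_realizable E w v t (dl \<sigma> (v, False)))
     \<and> walk_realizable E w s t (mu \<sigma>)
     \<and> (\<forall>u b v. Relax (u, b) v \<in># pend \<sigma> \<longrightarrow> (u, v) \<in> E)"

lemma distances_realizable_step:
  assumes G: "wgraph V E w" and step: "bstep E w \<sigma> \<sigma>'" and inv: "distances_realizable E w s t \<sigma>"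
  shows "distances_realizable E w s t \<sigma>'"
  using step
proof cases
  case (check_go y)
  with inv finite_successors[OF wgraph_finite_edges[OF G]] show ?thesis
    by (auto simp: distances_realizable_def in_diff_count)
next
  case (relax_dec u0 b0 v0)
  have "(u0, v0) \<in> E"
    using inv relax_dec by (auto simp: distances_realizable_def)
  then have "(v0, u0) \<in> E" "w v0 u0 = w u0 v0"
    using G unfolding wgraph_def sym_def by auto
  then have "walk_realizable E w s v0 (dl \<sigma> (u0, True) + ereal (w u0 v0))"
    "walk_realizable E w v0 t (dl \<sigma> (u0, False) + ereal (w u0 v0))"
    using inv \<open>(u0, v0) \<in> E\<close> walk_realizable_join walk_realizable_edge add.commute
    unfolding distances_realizable_def by metis+
  with relax_dec inv show ?thesis
    by (cases b0) (auto simp: distances_realizable_def dest: in_diffD)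
next
  case (updmu v0 b0)
  have "walk_realizable E w s t (dl \<sigma> (v0, True) + dl \<sigma> (v0, False))"
    using inv unfolding distances_realizable_def by (blast intro: walk_realizable_join)
  with updmu inv show ?thesis
    by (auto simp: distances_realizable_def min_def dest: in_diffD)
qed (use inv in \<open>auto simp: distances_realizable_def dest: in_diffD\<close>)

definition meets_bounded_or_pending :: "'v bstate \<Rightarrow> bool" where
  "meets_bounded_or_pending \<sigma> \<longleftrightarrow>
     (\<forall>v. mu \<sigma> \<le> dl \<sigma> (v, True) + dl \<sigma> (v, False) \<or> UpdMu v True \<in># pend \<sigma> \<or> UpdMu v False \<in># pend \<sigma>)"

lemma meets_bounded_or_pending_step:
  assumes step: "bstep E w \<sigma> \<sigma>'" and inv: "meets_bounded_or_pending \<sigma>"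
  shows "meets_bounded_or_pending \<sigma>'"
  using step
proof cases
  case (relax_dec u0 b0 v0)
  with inv show ?thesis
    by (cases b0) (auto simp: meets_bounded_or_pending_def in_diff_count)
next
  case (updmu v0 b0)
  with inv show ?thesis
    by (auto simp: meets_bounded_or_pending_def in_diff_count min_le_iff_disj)
qed (use inv in \<open>auto simp: meets_bounded_or_pending_def in_diff_count\<close>)

lemma reachable_invariants:
  assumes G: "wgraph V E w" and "s \<noteq> t" and "(bstep E w)\<^sup>*\<^sup>* (init_state s t) \<sigma>"
  shows "edges_settled_or_active E w \<sigma> \<and> meets_bounded_or_pending \<sigma> \<and> distances_realizable E w s t \<sigma>
    \<and> dl \<sigma> (s, True) \<le> 0 \<and> dl \<sigma> (t, False) \<le> 0"
  using assms(3)
proof (induction rule: rtranclp_induct)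
  case base
  show ?case
    using \<open>s \<noteq> t\<close> walk_realizable_refl[of E w s] walk_realizable_refl[of E w t]
    by (auto simp: init_state_def edges_settled_or_active_def settled_def prune_def active_def
        meets_bounded_or_pending_def distances_realizable_def walk_realizable_def)
next
  case (step \<sigma> \<sigma>')
  then show ?case
    using edges_settled_or_active_step[OF wgraph_finite_edges[OF G]] meets_bounded_or_pending_step
      distances_realizable_step[OF G] bstep_decreasing order_trans by meson
qed

lemma edges_relaxed_if_terminated:
  assumes "edges_settled_or_active E w \<sigma>" "fr \<sigma> = {}" "pend \<sigma> = {#}" "(u, v) \<in> E"
  shows "mu \<sigma> \<le> 2 * dl \<sigma> (u, b) \<or> dl \<sigma> (v, b) \<le> dl \<sigma> (u, b) + ereal (w u v)"
  using assms by (auto simp: edges_settled_or_active_def settled_def active_def prune_iff)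

theorem theorem3p2:
  fixes V :: "'v set" and E :: "('v \<times> 'v) set" and w :: "'v \<Rightarrow> 'v \<Rightarrow> real"
    and s t :: 'v and \<sigma> :: "'v bstate"
  assumes "wgraph V E w" and "s \<in> V" and "t \<in> V" and "s \<noteq> t"
    and "(bstep E w)\<^sup>*\<^sup>* (init_state s t) \<sigma>"
    and "fr \<sigma> = {}" and "pend \<sigma> = {#}"
  shows "mu \<sigma> = sp_dist E w s t"
proof (rule antisym)
  have inv: "edges_settled_or_active E w \<sigma>" "meets_bounded_or_pending \<sigma>" "distances_realizable E w s t \<sigma>"
    "dl \<sigma> (s, True) \<le> 0" "dl \<sigma> (t, False) \<le> 0"
    using reachable_invariants[OF assms(1,4,5)] by auto
  have graph: "sym E" "\<And>u v. (u, v) \<in> E \<Longrightarrow> w v u = w u v" "\<And>u v. (u, v) \<in> E \<Longrightarrow> 0 \<le> w u v"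
    using assms(1) unfolding wgraph_def by (auto simp: less_imp_le)
  show "mu \<sigma> \<le> sp_dist E w s t"
    by (rule meet_le_sp_dist[OF graph, where M = "mu \<sigma>" and Df = "\<lambda>v. dl \<sigma> (v, True)"
          and Db = "\<lambda>v. dl \<sigma> (v, False)"])
      (use inv edges_relaxed_if_terminated[OF inv(1) assms(6,7)] assms(7) in
        \<open>auto simp: meets_bounded_or_pending_def\<close>)
  show "sp_dist E w s t \<le> mu \<sigma>"
    using inv(3) by (auto simp: distances_realizable_def intro: sp_dist_le_walk_realizable)
qed

end
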